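(* Let $n=2k+1$ with $k$ a positive integer, and let $(\Gamma,+)$ be an abelian group of order $n$ with neutral element $e$ such that $\sum_{g\in\Gamma} g = e$ and $2g\neq e$ for all $g\in\Gamma\setminus\{e\}$. Let $p,q$ be two new symbols and let $P_n=(\Gamma\times(\Gamma\setminus\{e\}))\cup\{p,q\}$. Define the lines - $L_g=\{(h,g): h\in\Gamma\}$ for $g\in\Gamma\setminus\{e\}$; - $l_{p_g}=\{(g,h): h\in\Gamma\setminus\{e\}\}\cup\{p\}$ for $g\in\Gamma$; - $l_{q_g}=\{(h,h+g): h\in\Gamma,\ h+g\neq e\}\cup\{q\}$ for $g\in\Gamma$, and let $\mathcal{L}_n$ be the family of all these $3n-1$ lines. Then the linear system $\mathcal{C}_{n,n+1}=(P_n,\mathcal{L}_n)$ satisfies $\tau(\mathcal{C}_{n,n+1})=n+1$.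
   Context: A linear system is a pair $(P,\mathcal{L})$ with $P$ a finite set of points and $\mathcal{L}$ a family of subsets of $P$ (lines) such that any two distinct lines share at most one point. A transversal is a set of points meeting every line; $\tau$ denotes the minimum cardinality of a transversal. *)

theory Defs
  imports Main
begin

definition linear_system :: "'p set \<Rightarrow> 'p set set \<Rightarrow> bool" where
  "linear_system P L \<longleftrightarrow> finite P \<and> (\<forall>l\<in>L. l \<subseteq> P) \<and>
     (\<forall>l1\<in>L. \<forall>l2\<in>L. l1 \<noteq> l2 \<longrightarrow> card (l1 \<inter> l2) \<le> 1)"

definition is_transversal :: "'p set \<Rightarrow> 'p set set \<Rightarrow> 'p set \<Rightarrow> bool" where
  "is_transversal P L T \<longleftrightarrow> T \<subseteq> P \<and> (\<forall>l\<in>L. T \<inter> l \<noteq> {})"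

definition tau :: "'p set \<Rightarrow> 'p set set \<Rightarrow> nat" where
  "tau P L = (LEAST m. \<exists>T. finite T \<and> is_transversal P L T \<and> card T = m)"

datatype 'a pt = Pt 'a 'a | PtP | PtQ

definition cpoints :: "('a::ab_group_add) pt set" where
  "cpoints = {Pt h g | h g. g \<noteq> 0} \<union> {PtP, PtQ}"

definition line_L :: "'a::ab_group_add \<Rightarrow> 'a pt set" where
  "line_L g = {Pt h g | h. True}"

definition line_p :: "'a::ab_group_add \<Rightarrow> 'a pt set" where
  "line_p g = {Pt g h | h. h \<noteq> 0} \<union> {PtP}"

definition line_q :: "'a::ab_group_add \<Rightarrow> 'a pt set" where
  "line_q g = {Pt h (h + g) | h. h + g \<noteq> 0} \<union> {PtQ}"

definition clines :: "('a::ab_group_add) pt set set" where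
  "clines = {line_L g | g. g \<noteq> 0} \<union> {line_p g | g. True} \<union> {line_q g | g. True}"

end

theory Submission
  imports Defs "HOL-Library.Cardinality"
begin

text \<open>A transversal consisting of p, q and the points (0, g) shows \<open>\<tau> \<le> n + 1\<close>.
  Conversely, a transversal T with at most n points must avoid p and q, since it needs n - 1
  points of the grid to meet the lines \<open>L\<^sub>g\<close>, and n of them as soon as it misses p
  (lines \<open>l\<^sub>p\<^sub>g\<close>) or q (lines \<open>l\<^sub>q\<^sub>g\<close>). So T consists of n grid
  points (h, g) whose first coordinates h and differences g - h each run through the whole group.
  Summing, the second coordinates add up to 0; but they cover all n - 1 nonzero elements, which
  already add up to 0, with one repetition, and so the repeated element would be 0.
  Only \<open>\<Sum>\<Gamma> = 0\<close> enters this argument; \<open>2g \<noteq> 0\<close> is what makes the system linear.\<close>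

lemma tau_eqI:
  assumes "finite T" "is_transversal P L T" "card T = m"
    and "\<And>T. finite T \<Longrightarrow> is_transversal P L T \<Longrightarrow> m \<le> card T"
  shows "tau P L = m"
  unfolding tau_def
proof (rule Least_equality)
  show "\<exists>T. finite T \<and> is_transversal P L T \<and> card T = m"
    using assms(1-3) by blast
qed (use assms(4) in blast)

lemma sum_image_eq_card:
  assumes "finite A" "f ` A = B" "card A = card B"
  shows "sum f A = \<Sum>B"
proof -
  have "inj_on f A"
    using assms by (intro eq_card_imp_inj_on) auto
  then show ?thesis
    using assms(2) sum.reindex[of f A id] by simp
qed

lemma sum_nonzero_eq_sum_UNIV:
  "\<Sum>(UNIV - {0}) = \<Sum>(UNIV :: 'a::{comm_monoid_add,finite} set)"
  by (simp add: sum.remove[of "UNIV :: 'a set" 0 "\<lambda>x. x"])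

lemma no_covering_pair_set:
  fixes S :: "('a::{ab_group_add,finite} \<times> 'a) set"
  assumes sum_UNIV: "\<Sum>(UNIV :: 'a set) = 0"
    and fst_S: "fst ` S = UNIV"
    and diff_S: "(\<lambda>(h, g). g - h) ` S = UNIV"
    and snd_S: "snd ` S = UNIV - {0}"
    and card_S: "card S \<le> CARD('a)"
  shows False
proof -
  have fin: "finite S" by simp
  have "CARD('a) \<le> card S"
    using card_image_le[OF fin, of fst] fst_S by simp
  with card_S have card_S_eq: "card S = CARD('a)" by simp
  have "sum fst S = 0"
    using sum_image_eq_card[OF fin fst_S] card_S_eq sum_UNIV by simp
  moreover have "sum (\<lambda>(h, g). g - h) S = 0"
    using sum_image_eq_card[OF fin diff_S] card_S_eq sum_UNIV by simp
  ultimately have sum_snd: "sum snd S = 0"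
    by (simp add: case_prod_beta sum_subtractf)
  have "card (snd ` S) < card S"
    using snd_S card_S_eq by (simp add: card_Diff_singleton)
  then obtain x y where xy: "x \<in> S" "y \<in> S" "x \<noteq> y" "snd x = snd y"
    by (metis card_image inj_onI less_irrefl)
  have "snd ` (S - {x}) = UNIV - {0}"
    using snd_S xy by (auto simp: image_iff)
  moreover have "card (S - {x}) = card (UNIV - {0 :: 'a})"
    using xy(1) card_S_eq by (simp add: card_Diff_singleton)
  ultimately have "sum snd (S - {x}) = \<Sum>(UNIV - {0})"
    by (intro sum_image_eq_card) auto
  then have "sum snd (S - {x}) = 0"
    by (simp only: sum_nonzero_eq_sum_UNIV sum_UNIV)
  with sum_snd have "snd x = 0"
    by (simp add: sum.remove[OF fin xy(1)])
  with xy(1) snd_S show False by auto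
qed

definition grid_part :: "'a pt set \<Rightarrow> ('a \<times> 'a) set" where
  "grid_part T = {(h, g). Pt h g \<in> T}"

lemma card_split_grid_part:
  assumes "finite T"
  shows "card T = card (grid_part T) + card (T \<inter> {PtP, PtQ})"
proof -
  have "x \<in> case_prod Pt ` grid_part T" if "x \<in> T" "x \<noteq> PtP" "x \<noteq> PtQ" for x
    using that by (cases x) (auto simp: grid_part_def image_iff)
  then have T_split: "T = case_prod Pt ` grid_part T \<union> (T \<inter> {PtP, PtQ})"
    by (auto simp: grid_part_def)
  have "inj_on (case_prod Pt) (grid_part T)"
    by (auto simp: inj_on_def)
  moreover have "grid_part T = case_prod Pt -` T"
    by (auto simp: grid_part_def)
  then have "finite (grid_part T)"
    using assms by (simp add: finite_vimageI inj_def)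
  ultimately show ?thesis
    using assms by (subst T_split, subst card_Un_disjoint) (auto simp: card_image)
qed

context
  fixes T :: "'a::ab_group_add pt set"
  assumes transversal: "is_transversal cpoints clines T"
begin

lemma hits_line:
  assumes "l \<in> clines"
  obtains x where "x \<in> T" "x \<in> l"
  using transversal assms unfolding is_transversal_def by blast

lemma grid_part_snd_nonzero: "(h, g) \<in> grid_part T \<Longrightarrow> g \<noteq> 0"
  using transversal unfolding is_transversal_def grid_part_def cpoints_def by auto

lemma grid_part_snd_cover:
  assumes "g \<noteq> 0"
  shows "g \<in> snd ` grid_part T"
proof -
  have "line_L g \<in> clines"
    using assms unfolding clines_def by auto
  then obtain x where "x \<in> T" "x \<in> line_L g" by (rule hits_line)
  then show ?thesis
    unfolding line_L_def grid_part_def by force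
qed

lemma grid_part_fst_cover:
  assumes "PtP \<notin> T"
  shows "g \<in> fst ` grid_part T"
proof -
  have "line_p g \<in> clines"
    unfolding clines_def by auto
  then obtain x where "x \<in> T" "x \<in> line_p g" by (rule hits_line)
  with assms show ?thesis
    unfolding line_p_def grid_part_def by force
qed

lemma grid_part_diff_cover:
  assumes "PtQ \<notin> T"
  shows "g \<in> (\<lambda>(h, g). g - h) ` grid_part T"
proof -
  have "line_q g \<in> clines"
    unfolding clines_def by auto
  then obtain x where "x \<in> T" "x \<in> line_q g" by (rule hits_line)
  with assms show ?thesis
    unfolding line_q_def grid_part_def by force
qed

end

lemma transversal_card_ge:
  fixes T :: "'a::{ab_group_add,finite} pt set"
  assumes sum_UNIV: "\<Sum>(UNIV :: 'a set) = 0"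
    and tr: "is_transversal cpoints clines T" and fin: "finite T"
  shows "CARD('a) + 1 \<le> card T"
proof (rule ccontr)
  assume small: "\<not> ?thesis"
  let ?S = "grid_part T"
  have fin_S: "finite ?S" by simp
  have snd_S: "snd ` ?S = UNIV - {0}"
    using grid_part_snd_nonzero[OF tr] grid_part_snd_cover[OF tr] by fastforce
  then have "CARD('a) - 1 \<le> card ?S"
    using card_image_le[OF fin_S, of snd] by (simp add: card_Diff_singleton)
  moreover have "PtP \<notin> T \<Longrightarrow> CARD('a) \<le> card ?S"
    using card_image_le[OF fin_S, of fst] grid_part_fst_cover[OF tr]
    by (metis UNIV_eq_I card_UNIV)
  moreover have "PtQ \<notin> T \<Longrightarrow> CARD('a) \<le> card ?S"
    using card_image_le[OF fin_S, of "\<lambda>(h, g). g - h"] grid_part_diff_cover[OF tr]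
    by (metis UNIV_eq_I card_UNIV)
  moreover have "PtP \<in> T \<Longrightarrow> PtQ \<in> T \<Longrightarrow> card (T \<inter> {PtP, PtQ}) = 2"
    by (simp add: Int_absorb1)
  moreover have "PtP \<in> T \<or> PtQ \<in> T \<Longrightarrow> 1 \<le> card (T \<inter> {PtP, PtQ})"
    by (auto simp: Suc_le_eq card_gt_0_iff)
  moreover have "CARD('a) \<ge> 1"
    by (simp add: Suc_leI)
  ultimately have "PtP \<notin> T" "PtQ \<notin> T" "card ?S \<le> CARD('a)"
    using small card_split_grid_part[OF fin] by linarith+
  then show False
    using no_covering_pair_set[OF sum_UNIV _ _ snd_S] grid_part_fst_cover[OF tr]
      grid_part_diff_cover[OF tr] by blast
qed

lemma canonical_transversal:
  defines "T \<equiv> {PtP, PtQ} \<union> Pt 0 ` (UNIV - {0 :: 'a::{ab_group_add,finite}})"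
  shows "is_transversal cpoints clines T" and "card T = CARD('a) + 1"
proof -
  show "is_transversal cpoints clines T"
    unfolding is_transversal_def T_def
  proof (intro conjI ballI)
    fix l :: "'a pt set"
    assume "l \<in> clines"
    then consider g where "g \<noteq> 0" "l = line_L g" | g where "l = line_p g" | g where "l = line_q g"
      unfolding clines_def by blast
    then show "({PtP, PtQ} \<union> Pt 0 ` (UNIV - {0})) \<inter> l \<noteq> {}"
      by cases (auto simp: line_L_def line_p_def line_q_def)
  qed (auto simp: cpoints_def)
  have "card T = 2 + card (UNIV - {0 :: 'a})"
    unfolding T_def by (subst card_Un_disjoint) (auto simp: card_image inj_on_def)
  then show "card T = CARD('a) + 1"
    using Suc_leI[OF finite_UNIV_card_ge_0] by (simp add: card_Diff_singleton)
qed

theorem proposition3p1: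
  fixes k :: nat
  assumes "k > 0"
    and "card (UNIV :: ('a::{ab_group_add,finite}) set) = 2 * k + 1"
    and "(\<Sum>g\<in>(UNIV :: 'a set). g) = 0"
    and "\<forall>g :: 'a. g \<noteq> 0 \<longrightarrow> g + g \<noteq> 0"
  shows "tau (cpoints :: 'a pt set) clines = 2 * k + 2"
proof -
  have "tau (cpoints :: 'a pt set) clines = CARD('a) + 1"
  proof (rule tau_eqI)
    show "finite ({PtP, PtQ} \<union> Pt 0 ` (UNIV - {0 :: 'a}))" by simp
  qed (use canonical_transversal transversal_card_ge[OF assms(3)] in auto)
  with assms(2) show ?thesis by simp
qed

end
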